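(* Let $E$ be a second countable Stone space and let $\gamma_1,\ldots,\gamma_k$ be pairwise compatible non-peripheral cuts of $E$. Then the graph $\big(L(\gamma_1)\cap\cdots\cap L(\gamma_k)\big)^\perp$ has at most $k+1$ connected components. Moreover, if it has exactly $k+1$ components, then: (1) no $\gamma_i$ is outermost; (2) no pair $\gamma_i,\gamma_j$ ($i\ne j$) is a peripheral pair; (3) for every triple of distinct indices $i,j,l$ such that the adjacency graph $A(\{\gamma_i,\gamma_j,\gamma_l\})$ is a triangle, one may write $\gamma_i=U_i\sqcup V_i$, $\gamma_j=U_j\sqcup V_j$, $\gamma_l=U_l\sqcup V_l$ so that $U_i\cap U_j=U_i\cap U_l=U_j\cap U_l=\varnothing$ and $V_i\cap V_j\cap V_l\ne\varnothing$.
   Context: A Stone space is a compact, Hausdorff, totally disconnected space. A cut of $E$ is an unordered partition of $E$ into two disjoint clopen sets $U,V$, written $U\sqcup V$; it is non-peripheral if each of $U,V$ contains at least two points, and outermost (if non-peripheral) when one side has exactly two points. Two cuts $U\sqcup V$, $U'\sqcup V'$ cross if all four sets $U\cap U'$, $U\cap V'$, $V\cap U'$, $V\cap V'$ are nonempty; otherwise they are compatible. The complex of cuts $\mathscr{C}(E)$ is the simplicial graph whose vertices are the non-peripheral cuts, with edges between distinct compatible cuts. Two distinct non-peripheral cuts form a peripheral pair if they are compatible and one of the four intersections above is a singleton. The link $L(\gamma)$ is the full subgraph of $\mathscr{C}(E)$ on the vertices adjacent to $\gamma$, and $L(\gamma_1)\cap\cdots\cap L(\gamma_k)$ is the full subgraph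 on the vertices adjacent to every $\gamma_i$. For a graph $L$, the opposite graph $L^\perp$ has the same vertices, with an edge between distinct vertices exactly when they are not adjacent in $L$. For a finite collection $\Gamma$ of pairwise compatible non-peripheral cuts, two cuts $\gamma,\gamma'\in\Gamma$ are adjacent if some non-peripheral cut crosses $\gamma$ and $\gamma'$ and no other cut of $\Gamma$; the adjacency graph $A(\Gamma)$ has vertex set $\Gamma$ and edges between adjacent cuts. *)

theory Defs
  imports "HOL-Analysis.Analysis"
begin

definition totally_disconnected_space :: "'a topology \<Rightarrow> bool" where
  "totally_disconnected_space X \<longleftrightarrow> (\<forall>S. connectedin X S \<longrightarrow> (\<exists>a. S \<subseteq> {a}))"

definition stone_space :: "'a topology \<Rightarrow> bool" where
  "stone_space X \<longleftrightarrow> compact_space X \<and> Hausdorff_space X \<and> totally_disconnected_space X"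

text \<open>A cut is an unordered partition of the space into two disjoint (nonempty) clopen sets,
  represented as the two-element set of its sides.\<close>
definition is_cut :: "'a topology \<Rightarrow> 'a set set \<Rightarrow> bool" where
  "is_cut X c \<longleftrightarrow> (\<exists>U V. c = {U, V} \<and> openin X U \<and> closedin X U \<and> openin X V \<and> closedin X V
      \<and> U \<inter> V = {} \<and> U \<union> V = topspace X \<and> U \<noteq> {} \<and> V \<noteq> {})"

definition non_peripheral :: "'a topology \<Rightarrow> 'a set set \<Rightarrow> bool" where
  "non_peripheral X c \<longleftrightarrow> is_cut X c \<and> (\<forall>A\<in>c. \<exists>x y. x \<in> A \<and> y \<in> A \<and> x \<noteq> y)"

definition outermost :: "'a topology \<Rightarrow> 'a set set \<Rightarrow> bool" where
  "outermost X c \<longleftrightarrow> non_peripheral X c \<and> (\<exists>A\<in>c. finite A \<and> card A = 2)"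

definition crosses :: "'a set set \<Rightarrow> 'a set set \<Rightarrow> bool" where
  "crosses c d \<longleftrightarrow> (\<forall>A\<in>c. \<forall>B\<in>d. A \<inter> B \<noteq> {})"

definition compatible :: "'a set set \<Rightarrow> 'a set set \<Rightarrow> bool" where
  "compatible c d \<longleftrightarrow> \<not> crosses c d"

definition peripheral_pair :: "'a topology \<Rightarrow> 'a set set \<Rightarrow> 'a set set \<Rightarrow> bool" where
  "peripheral_pair X c d \<longleftrightarrow> non_peripheral X c \<and> non_peripheral X d \<and> c \<noteq> d \<and> compatible c d
      \<and> (\<exists>A\<in>c. \<exists>B\<in>d. \<exists>x. A \<inter> B = {x})"

definition cc_adj :: "'a topology \<Rightarrow> 'a set set \<Rightarrow> 'a set set \<Rightarrow> bool" where
  "cc_adj X c d \<longleftrightarrow> non_peripheral X c \<and> non_peripheral X d \<and> c \<noteq> d \<and> compatible c d"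

text \<open>Vertex set of the full subgraph \<open>L(\<gamma>_1) \<inter> ... \<inter> L(\<gamma>_k)\<close> (cuts indexed by \<open>i < k\<close>).\<close>
definition link_inter :: "'a topology \<Rightarrow> (nat \<Rightarrow> 'a set set) \<Rightarrow> nat \<Rightarrow> 'a set set set" where
  "link_inter X g k = {d. non_peripheral X d \<and> (\<forall>i<k. cc_adj X (g i) d)}"

text \<open>Edge relation of the opposite graph \<open>L^\<perp>\<close> of the full subgraph of the complex of cuts on \<open>S\<close>.\<close>
definition opp_adj :: "'a topology \<Rightarrow> 'a set set set \<Rightarrow> 'a set set \<Rightarrow> 'a set set \<Rightarrow> bool" where
  "opp_adj X S c d \<longleftrightarrow> c \<in> S \<and> d \<in> S \<and> c \<noteq> d \<and> \<not> cc_adj X c d"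

definition opp_components :: "'a topology \<Rightarrow> 'a set set set \<Rightarrow> 'a set set set set" where
  "opp_components X S = {{d \<in> S. (opp_adj X S)\<^sup>*\<^sup>* c d} | c. c \<in> S}"

definition Gamma_adjacent :: "'a topology \<Rightarrow> 'a set set set \<Rightarrow> 'a set set \<Rightarrow> 'a set set \<Rightarrow> bool" where
  "Gamma_adjacent X \<Gamma> c d \<longleftrightarrow> (\<exists>e. non_peripheral X e \<and> crosses e c \<and> crosses e d
      \<and> (\<forall>h\<in>\<Gamma>. h \<noteq> c \<and> h \<noteq> d \<longrightarrow> \<not> crosses e h))"

definition adj_triangle :: "'a topology \<Rightarrow> 'a set set \<Rightarrow> 'a set set \<Rightarrow> 'a set set \<Rightarrow> bool" where
  "adj_triangle X a b c \<longleftrightarrow> a \<noteq> b \<and> a \<noteq> c \<and> b \<noteq> c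
     \<and> Gamma_adjacent X {a, b, c} a b \<and> Gamma_adjacent X {a, b, c} a c \<and> Gamma_adjacent X {a, b, c} b c"

end

theory Submission
  imports Defs
begin

text \<open>
  Every cut \<open>d\<close> of the intersected link \<open>L\<close> orients each \<open>\<gamma>\<^sub>i\<close> towards \<open>d\<close>, and these sides
  meet pairwise: \<open>d\<close> defines a consistent orientation of \<open>\<gamma>\<^sub>1, \<dots>, \<gamma>\<^sub>k\<close>. Crossing cuts induce the same
  orientation; conversely two cuts of \<open>L\<close> with the same orientation are either crossing or both
  crossed by a third cut of \<open>L\<close>, obtained by carving clopen pieces out of disjoint sides, which is
  possible because \<open>E\<close> is a Stone space. Hence the components of \<open>L\<^sup>\<perp>\<close> correspond to the realised
  consistent orientations. As the \<open>\<gamma>\<^sub>i\<close> are pairwise compatible, adding one of them to the list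
  splits at most one consistent orientation, so there are at most \<open>k + 1\<close> of them.

  With \<open>k + 1\<close> components every consistent orientation is realised by a cut of \<open>L\<close>. An outermost
  \<open>\<gamma>\<^sub>i\<close>, a peripheral pair, or a triangle whose three outer sides do not meet each admit a consistent
  orientation that can only be realised by one of the \<open>\<gamma>\<^sub>i\<close> themselves, which are not in \<open>L\<close>.
\<close>

lemma is_cut_sideD:
  assumes "is_cut X c" "A \<in> c"
  shows "c = {A, topspace X - A}" "A \<subseteq> topspace X" "A \<noteq> {}" "topspace X - A \<noteq> {}"
    "openin X A" "closedin X A"
proof -
  obtain U V where UV: "c = {U, V}" "openin X U" "closedin X U" "openin X V" "closedin X V"
      "U \<inter> V = {}" "U \<union> V = topspace X" "U \<noteq> {}" "V \<noteq> {}"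
    using assms(1) unfolding is_cut_def by blast
  then have "A = U \<and> topspace X - A = V \<or> A = V \<and> topspace X - A = U"
    using assms(2) by blast
  then show "c = {A, topspace X - A}" "A \<subseteq> topspace X" "A \<noteq> {}" "topspace X - A \<noteq> {}"
    "openin X A" "closedin X A"
    using UV by auto
qed

lemma is_cut_obtain_side:
  assumes "is_cut X c"
  obtains A where "c = {A, topspace X - A}" "A \<subseteq> topspace X" "A \<noteq> {}" "topspace X - A \<noteq> {}"
proof -
  obtain U V where "c = {U, V}"
    using assms unfolding is_cut_def by blast
  then show ?thesis
    using that is_cut_sideD[OF assms, of U] by blast
qed

lemma is_cut_finite: "is_cut X c \<Longrightarrow> finite c"
  unfolding is_cut_def by auto

lemma is_cut_eq_two_sides:
  assumes "is_cut X c" "A \<in> c" "B \<in> c" "A \<noteq> B"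
  shows "c = {A, B}"
  using is_cut_sideD(1)[OF assms(1,2)] assms(3,4) by auto

lemma is_cut_clopen:
  assumes "openin X P" "closedin X P" "P \<noteq> {}" "topspace X - P \<noteq> {}"
  shows "is_cut X {P, topspace X - P}"
proof -
  have "openin X (topspace X - P)"
    using openin_diff[OF openin_topspace assms(2)] .
  moreover have "closedin X (topspace X - P)"
    using closedin_diff[OF closedin_topspace assms(1)] .
  ultimately show ?thesis
    unfolding is_cut_def using assms openin_subset[OF assms(1)] by blast
qed

lemma crosses_commute: "crosses c d \<longleftrightarrow> crosses d c"
  unfolding crosses_def by blast

lemma is_cut_not_crosses_self:
  assumes "is_cut X d"
  shows "\<not> crosses d d"
proof -
  obtain A where "d = {A, topspace X - A}"
    using is_cut_obtain_side[OF assms] by blast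
  then show ?thesis
    unfolding crosses_def by auto
qed

lemma compatible_disjoint_sides: "compatible c d \<Longrightarrow> \<exists>A\<in>c. \<exists>B\<in>d. A \<inter> B = {}"
  unfolding compatible_def crosses_def by blast

lemma compatible_sides_cases:
  assumes "compatible c d" "is_cut X c" "is_cut X d" "A \<in> c" "B \<in> d"
  shows "A \<subseteq> B \<or> B \<subseteq> A \<or> A \<inter> B = {} \<or> A \<union> B = topspace X"
proof -
  obtain P Q where PQ: "P \<in> c" "Q \<in> d" "P \<inter> Q = {}"
    using compatible_disjoint_sides[OF assms(1)] by blast
  have "P = A \<or> P = topspace X - A" "Q = B \<or> Q = topspace X - B"
    using PQ(1,2) is_cut_sideD(1)[OF assms(2,4)] is_cut_sideD(1)[OF assms(3,5)] by auto
  then show ?thesis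
    by (elim disjE) (use PQ(3) is_cut_sideD(2)[OF assms(2,4)] is_cut_sideD(2)[OF assms(3,5)] in blast)+
qed

lemma is_cut_side_meeting_all:
  assumes "is_cut X c" "\<forall>S\<in>\<S>. S \<subseteq> topspace X" "\<forall>S\<in>\<S>. \<forall>T\<in>\<S>. S \<inter> T \<noteq> {}"
  shows "\<exists>B\<in>c. B \<noteq> {} \<and> (\<forall>S\<in>\<S>. S \<inter> B \<noteq> {})"
proof -
  obtain A where A: "c = {A, topspace X - A}" "A \<subseteq> topspace X" "A \<noteq> {}" "topspace X - A \<noteq> {}"
    by (rule is_cut_obtain_side[OF assms(1)])
  have sides: "A \<in> c" "topspace X - A \<in> c"
    using A(1) by simp_all
  show ?thesis
  proof (cases "\<forall>S\<in>\<S>. S \<inter> A \<noteq> {}")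
    case True
    then show ?thesis
      using A(3) by (intro bexI[OF _ sides(1)]) simp
  next
    case False
    then obtain S0 where S0: "S0 \<in> \<S>" "S0 \<inter> A = {}"
      by blast
    have "S \<inter> (topspace X - A) \<noteq> {}" if "S \<in> \<S>" for S
    proof
      assume "S \<inter> (topspace X - A) = {}"
      then have "S0 \<inter> S = {}"
        using S0(2) assms(2) that by blast
      then show False
        using assms(3) S0(1) that by blast
    qed
    then show ?thesis
      using A(4) by (intro bexI[OF _ sides(2)]) blast
  qed
qed

lemma crosses_between:
  assumes "is_cut X b" "is_cut X c" "A \<in> a" "B \<in> b" "C \<in> c" "A \<subseteq> B" "B \<inter> C = {}"
    and "crosses e a" "crosses e c"
  shows "crosses e b"
  unfolding crosses_def
proof (intro ballI)
  fix P Q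
  assume P: "P \<in> e" and Q: "Q \<in> b"
  have "P \<inter> A \<noteq> {}" "P \<inter> C \<noteq> {}"
    using assms(3,5,8,9) P unfolding crosses_def by blast+
  moreover have "Q = B \<or> Q = topspace X - B"
    using Q is_cut_sideD(1)[OF assms(1,4)] by auto
  moreover have "C \<subseteq> topspace X - B"
    using assms(7) is_cut_sideD(2)[OF assms(2,5)] by blast
  ultimately show "P \<inter> Q \<noteq> {}"
    using assms(6) by blast
qed

lemma Gamma_adjacent_not_separated:
  assumes "Gamma_adjacent X \<Gamma> a c" "b \<in> \<Gamma>" "b \<noteq> a" "b \<noteq> c"
    and "is_cut X b" "is_cut X c" "A \<in> a" "B \<in> b" "C \<in> c" "A \<subseteq> B" "B \<inter> C = {}"
  shows False
proof -
  obtain e where e: "crosses e a" "crosses e c" "\<forall>h\<in>\<Gamma>. h \<noteq> a \<and> h \<noteq> c \<longrightarrow> \<not> crosses e h"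
    using assms(1) unfolding Gamma_adjacent_def by blast
  then show False
    using crosses_between[OF assms(5-11) e(1,2)] assms(2-4) by blast
qed

lemma crossing_cut_from_pieces:
  assumes "is_cut X d" "is_cut X d'" "D \<in> d" "F \<in> d'" "D \<inter> F = {}"
    and "openin X D1" "closedin X D1" "D1 \<subseteq> D" "D1 \<noteq> {}" "D - D1 \<noteq> {}"
    and "openin X F1" "closedin X F1" "F1 \<subseteq> F" "F1 \<noteq> {}" "F - F1 \<noteq> {}"
  defines "e \<equiv> {D1 \<union> F1, topspace X - (D1 \<union> F1)}"
  shows "non_peripheral X e" "crosses e d" "crosses e d'"
proof -
  let ?P = "D1 \<union> F1"
  have d: "d = {D, topspace X - D}" "D \<subseteq> topspace X"
    using is_cut_sideD[OF assms(1,3)] by auto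
  have d': "d' = {F, topspace X - F}" "F \<subseteq> topspace X"
    using is_cut_sideD[OF assms(2,4)] by auto
  have outside: "D - D1 \<subseteq> topspace X - ?P" "F - F1 \<subseteq> topspace X - ?P"
    using assms(5,8,13) d(2) d'(2) by blast+
  have "is_cut X e"
    unfolding e_def using assms(6-15) outside
    by (intro is_cut_clopen openin_Un closedin_Un) blast+
  moreover have "\<exists>x y. x \<in> ?P \<and> y \<in> ?P \<and> x \<noteq> y"
    using assms(5,8,9,13,14) by blast
  moreover have "\<exists>x y. x \<in> topspace X - ?P \<and> y \<in> topspace X - ?P \<and> x \<noteq> y"
    using assms(5,10,15) outside by blast
  ultimately show "non_peripheral X e"
    unfolding non_peripheral_def by (auto simp: e_def)
  have "?P \<inter> D \<noteq> {}" "?P \<inter> (topspace X - D) \<noteq> {}"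
    "(topspace X - ?P) \<inter> D \<noteq> {}" "(topspace X - ?P) \<inter> (topspace X - D) \<noteq> {}"
    using assms(5,8-10,13-15) d'(2) outside by blast+
  then show "crosses e d"
    unfolding crosses_def e_def d(1) by auto
  have "?P \<inter> F \<noteq> {}" "?P \<inter> (topspace X - F) \<noteq> {}"
    "(topspace X - ?P) \<inter> F \<noteq> {}" "(topspace X - ?P) \<inter> (topspace X - F) \<noteq> {}"
    using assms(5,8-10,13-15) d(2) outside by blast+
  then show "crosses e d'"
    unfolding crosses_def e_def d'(1) by auto
qed

lemma piece_nested_or_disjoint:
  assumes "A \<subseteq> D" "D \<inter> F = {}" "F1 \<subseteq> F" "A \<subseteq> D1 \<or> A \<inter> D1 = {}"
  shows "A \<inter> (D1 \<union> F1) = {} \<or> A \<inter> (S - (D1 \<union> F1)) = {}"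
  using assms(4)
proof
  assume "A \<subseteq> D1"
  then show ?thesis
    by (intro disjI2) blast
next
  assume "A \<inter> D1 = {}"
  then show ?thesis
    using assms(1-3) by (intro disjI1) blast
qed

lemma stone_space_separating_clopen:
  assumes "stone_space X" "x \<in> topspace X" "y \<in> topspace X" "x \<noteq> y"
  obtains T where "openin X T" "closedin X T" "x \<in> T" "y \<notin> T"
proof -
  have "compact_space X" "Hausdorff_space X" and td: "totally_disconnected_space X"
    using assms(1) unfolding stone_space_def by auto
  \<comment> \<open>In a compact Hausdorff space quasi-components are components, here singletons.\<close>
  then have quasi: "quasi_component_of X x = connected_component_of X x"
    by (intro quasi_eq_connected_component_of) auto
  have "connectedin X (connected_component_of_set X x)"
    by (simp add: connectedin_connected_component_of)
  then obtain a where "connected_component_of_set X x \<subseteq> {a}"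
    using td unfolding totally_disconnected_space_def by blast
  moreover have "x \<in> connected_component_of_set X x"
    using assms(2) by (simp add: connected_component_of_refl)
  ultimately have "\<not> connected_component_of X x y"
    using assms(4) by auto
  then have "\<not> quasi_component_of X x y"
    using quasi by metis
  then obtain T where T: "closedin X T" "openin X T" "\<not> (x \<in> T \<longleftrightarrow> y \<in> T)"
    using assms(2,3) unfolding quasi_component_of_def by blast
  show ?thesis
  proof (cases "x \<in> T")
    case True
    then show ?thesis
      using that T by blast
  next
    case False
    moreover have "openin X (topspace X - T)" "closedin X (topspace X - T)"
      using openin_diff[OF openin_topspace T(1)] closedin_diff[OF closedin_topspace T(2)] .
    ultimately show ?thesis
      using that[of "topspace X - T"] T(3) assms(2) by blast
  qed
qed

lemma fun_upd_eq_imp_eq: "f(n := c) = h(n := c) \<Longrightarrow> f n = h n \<Longrightarrow> f = h"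
  by (metis fun_upd_triv fun_upd_upd)

lemma card_two_subset_eq:
  assumes "x \<in> D" "y \<in> D" "x \<noteq> y" "D \<subseteq> A" "finite A" "card A = 2"
  shows "D = A"
proof -
  have "card {x, y} \<le> card D"
    using assms(1,2,4,5) by (intro card_mono finite_subset[of D A]) auto
  then show ?thesis
    using card_seteq[OF assms(5,4)] assms(3,6) by simp
qed

locale compatible_cuts =
  fixes X :: "'a topology" and g :: "nat \<Rightarrow> 'a set set" and k :: nat
  assumes cut: "\<And>i. i < k \<Longrightarrow> is_cut X (g i)"
    and compat: "\<And>i j. i < k \<Longrightarrow> j < k \<Longrightarrow> compatible (g i) (g j)"
begin

abbreviation E where "E \<equiv> topspace X"

text \<open>A consistent orientation of \<open>g 0, \<dots>, g (n - 1)\<close> chooses pairwise meeting sides; it is \<open>{}\<close>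
  from \<open>n\<close> on, so that it is determined by its choices.\<close>
definition consistent_orientations :: "nat \<Rightarrow> (nat \<Rightarrow> 'a set) set" where
  "consistent_orientations n = {\<sigma>. (\<forall>i<n. \<sigma> i \<in> g i) \<and> (\<forall>i\<ge>n. \<sigma> i = {})
      \<and> (\<forall>i<n. \<forall>j<n. \<sigma> i \<inter> \<sigma> j \<noteq> {})}"

lemma consistent_orientations_restrict:
  "\<sigma> \<in> consistent_orientations (Suc n) \<Longrightarrow> \<sigma>(n := {}) \<in> consistent_orientations n"
  unfolding consistent_orientations_def by auto

definition extends_both_ways :: "nat \<Rightarrow> (nat \<Rightarrow> 'a set) \<Rightarrow> bool" where
  "extends_both_ways n \<tau> \<longleftrightarrow> (\<forall>B\<in>g n. \<tau>(n := B) \<in> consistent_orientations (Suc n))"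

lemma consistent_orientation_side:
  "\<sigma> \<in> consistent_orientations n \<Longrightarrow> i < n \<Longrightarrow> \<sigma> i \<in> g i"
  unfolding consistent_orientations_def by blast

lemma extends_both_ways_meets:
  assumes "extends_both_ways n \<tau>" "i < n" "B \<in> g n"
  shows "\<tau> i \<inter> B \<noteq> {}"
proof -
  have "\<tau>(n := B) \<in> consistent_orientations (Suc n)"
    using assms(1,3) unfolding extends_both_ways_def by blast
  then have "\<forall>a<Suc n. \<forall>b<Suc n. (\<tau>(n := B)) a \<inter> (\<tau>(n := B)) b \<noteq> {}"
    unfolding consistent_orientations_def by blast
  then have "(\<tau>(n := B)) i \<inter> (\<tau>(n := B)) n \<noteq> {}"
    using assms(2) by (meson lessI less_SucI)
  then show ?thesis
    using assms(2) by simp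
qed

text \<open>Two different such orientations differ at some \<open>i < n\<close>, and then both sides of \<open>g i\<close> meet
  both sides of \<open>g n\<close>.\<close>
lemma extends_both_ways_unique:
  assumes "n < k" "\<tau> \<in> consistent_orientations n" "\<tau>' \<in> consistent_orientations n"
    and "extends_both_ways n \<tau>" "extends_both_ways n \<tau>'"
  shows "\<tau> = \<tau>'"
proof
  fix i
  show "\<tau> i = \<tau>' i"
  proof (rule ccontr)
    assume ne: "\<tau> i \<noteq> \<tau>' i"
    have i: "i < n"
    proof (rule ccontr)
      assume "\<not> i < n"
      then have "\<tau> i = {}" "\<tau>' i = {}"
        using assms(2,3) unfolding consistent_orientations_def by auto
      then show False
        using ne by simp
    qed
    then have gi: "g i = {\<tau> i, \<tau>' i}"
      using is_cut_eq_two_sides[OF cut consistent_orientation_side[OF assms(2) i]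
          consistent_orientation_side[OF assms(3) i] ne] assms(1) by simp
    have "crosses (g i) (g n)"
      unfolding crosses_def gi using extends_both_ways_meets[OF assms(4) i]
        extends_both_ways_meets[OF assms(5) i] by blast
    then show False
      using compat[of i n] i assms(1) unfolding compatible_def by simp
  qed
qed

lemma collision_extends_both_ways:
  assumes "n < k" "\<sigma>1 \<in> consistent_orientations (Suc n)" "\<sigma>2 \<in> consistent_orientations (Suc n)"
    and "\<sigma>1 \<noteq> \<sigma>2" "\<sigma>1(n := {}) = \<sigma>2(n := {})"
  shows "extends_both_ways n (\<sigma>1(n := {}))" "g n = {\<sigma>1 n, \<sigma>2 n}"
proof -
  have "\<sigma>1 n \<noteq> \<sigma>2 n"
    using fun_upd_eq_imp_eq[OF assms(5)] assms(4) by blast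
  then show gn: "g n = {\<sigma>1 n, \<sigma>2 n}"
    by (rule is_cut_eq_two_sides[OF cut[OF assms(1)] consistent_orientation_side[OF assms(2) lessI]
          consistent_orientation_side[OF assms(3) lessI]])
  have "(\<sigma>1(n := {}))(n := \<sigma>2 n) = (\<sigma>2(n := {}))(n := \<sigma>2 n)"
    by (simp only: assms(5))
  then have "(\<sigma>1(n := {}))(n := B) \<in> consistent_orientations (Suc n)" if "B \<in> {\<sigma>1 n, \<sigma>2 n}" for B
    using that assms(2,3) by auto
  then show "extends_both_ways n (\<sigma>1(n := {}))"
    unfolding extends_both_ways_def gn by blast
qed

text \<open>Forgetting the side of \<open>g n\<close> identifies at most one pair of orientations, as at most one
  orientation of the first \<open>n\<close> cuts extends both ways.\<close>
lemma consistent_orientations_restrict_inj_off_one: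
  assumes "n < k"
  obtains \<sigma>0 where "inj_on (\<lambda>\<sigma>. \<sigma>(n := {})) (consistent_orientations (Suc n) - {\<sigma>0})"
proof (cases "inj_on (\<lambda>\<sigma>. \<sigma>(n := {})) (consistent_orientations (Suc n))")
  case True
  show ?thesis
    using inj_on_diff[OF True] by (rule that)
next
  case False
  then obtain \<sigma>1 \<sigma>2 where \<sigma>12: "\<sigma>1 \<in> consistent_orientations (Suc n)"
      "\<sigma>2 \<in> consistent_orientations (Suc n)" "\<sigma>1 \<noteq> \<sigma>2" "\<sigma>1(n := {}) = \<sigma>2(n := {})"
    unfolding inj_on_def by blast
  have "inj_on (\<lambda>\<sigma>. \<sigma>(n := {})) (consistent_orientations (Suc n) - {\<sigma>1})"
  proof (rule inj_onI, rule ccontr)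
    fix \<sigma> \<sigma>'
    assume \<sigma>: "\<sigma> \<in> consistent_orientations (Suc n) - {\<sigma>1}"
      "\<sigma>' \<in> consistent_orientations (Suc n) - {\<sigma>1}" "\<sigma>(n := {}) = \<sigma>'(n := {})" "\<sigma> \<noteq> \<sigma>'"
    have C: "\<sigma> \<in> consistent_orientations (Suc n)" "\<sigma>' \<in> consistent_orientations (Suc n)"
      using \<sigma>(1,2) by auto
    have restr: "\<sigma>(n := {}) = \<sigma>1(n := {})"
      by (rule extends_both_ways_unique[OF assms consistent_orientations_restrict[OF C(1)]
            consistent_orientations_restrict[OF \<sigma>12(1)] collision_extends_both_ways(1)[OF assms C \<sigma>(4,3)]
            collision_extends_both_ways(1)[OF assms \<sigma>12]])
    have "\<sigma>1 n \<in> {\<sigma> n, \<sigma>' n}"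
      using collision_extends_both_ways(2)[OF assms C \<sigma>(4,3)] consistent_orientation_side[OF \<sigma>12(1) lessI]
      by simp
    moreover have "\<sigma>1(n := {}) = \<sigma>(n := {})" "\<sigma>1(n := {}) = \<sigma>'(n := {})"
      using restr \<sigma>(3) by simp_all
    ultimately have "\<sigma>1 = \<sigma> \<or> \<sigma>1 = \<sigma>'"
      using fun_upd_eq_imp_eq[of \<sigma>1 n "{}" \<sigma>] fun_upd_eq_imp_eq[of \<sigma>1 n "{}" \<sigma>'] by auto
    then show False
      using \<sigma>(1,2) by blast
  qed
  then show ?thesis
    using that by blast
qed

lemma card_consistent_orientations:
  "n \<le> k \<Longrightarrow> finite (consistent_orientations n) \<and> card (consistent_orientations n) \<le> n + 1"
proof (induction n)
  case 0
  have "consistent_orientations 0 = {\<lambda>_. {}}"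
    unfolding consistent_orientations_def by auto
  then show ?case
    by simp
next
  case (Suc n)
  let ?C = "consistent_orientations (Suc n)"
  have "n < k"
    using Suc.prems by simp
  then obtain \<sigma>0 where inj: "inj_on (\<lambda>\<sigma>. \<sigma>(n := {})) (?C - {\<sigma>0})"
    by (rule consistent_orientations_restrict_inj_off_one)
  have into: "(\<lambda>\<sigma>. \<sigma>(n := {})) ` (?C - {\<sigma>0}) \<subseteq> consistent_orientations n"
    using consistent_orientations_restrict by blast
  have IH: "finite (consistent_orientations n)" "card (consistent_orientations n) \<le> n + 1"
    using Suc by auto
  have "finite (?C - {\<sigma>0})"
    using finite_imageD[OF finite_subset[OF into IH(1)] inj] .
  then have "finite ?C"
    by simp
  then have "card ?C \<le> card (?C - {\<sigma>0}) + 1"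
    by (cases "\<sigma>0 \<in> ?C") (simp_all add: card_Suc_Diff1)
  moreover have "card (?C - {\<sigma>0}) \<le> card (consistent_orientations n)"
    using card_inj_on_le[OF inj into IH(1)] .
  ultimately show ?case
    using IH(2) \<open>finite ?C\<close> by simp
qed

lemma finite_consistent_orientations: "finite (consistent_orientations k)"
  using card_consistent_orientations[OF order_refl] by blast

lemma card_consistent_orientations_le: "card (consistent_orientations k) \<le> k + 1"
  using card_consistent_orientations[OF order_refl] by blast

definition consistent_on :: "nat set \<Rightarrow> (nat \<Rightarrow> 'a set) \<Rightarrow> bool" where
  "consistent_on J \<sigma> \<longleftrightarrow> (\<forall>i\<in>J. \<sigma> i \<in> g i) \<and> (\<forall>i\<in>J. \<forall>j\<in>J. \<sigma> i \<inter> \<sigma> j \<noteq> {})"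

lemma consistent_on_insert:
  assumes "consistent_on J \<sigma>" "J \<subseteq> {..<k}" "n < k" "n \<notin> J"
  shows "\<exists>B. consistent_on (insert n J) (\<sigma>(n := B))"
proof -
  note \<sigma> = assms(1)[unfolded consistent_on_def]
  have "\<sigma> t \<subseteq> E" if "t \<in> J" for t
  proof -
    have "t < k"
      using that assms(2) by auto
    then show ?thesis
      using is_cut_sideD(2)[OF cut] \<sigma> that by blast
  qed
  then have "\<forall>S\<in>\<sigma> ` J. S \<subseteq> E"
    by blast
  moreover have "\<forall>S\<in>\<sigma> ` J. \<forall>T\<in>\<sigma> ` J. S \<inter> T \<noteq> {}"
    using \<sigma> by simp
  ultimately have "\<exists>B\<in>g n. B \<noteq> {} \<and> (\<forall>S\<in>\<sigma> ` J. S \<inter> B \<noteq> {})"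
    by (rule is_cut_side_meeting_all[OF cut[OF assms(3)]])
  then obtain B where B: "B \<in> g n" "B \<noteq> {}" "\<forall>t\<in>J. \<sigma> t \<inter> B \<noteq> {}"
    by auto
  have "(\<sigma>(n := B)) i \<inter> (\<sigma>(n := B)) j \<noteq> {}" if "i \<in> insert n J" "j \<in> insert n J" for i j
    using that assms(4) \<sigma> B(2,3) by (cases "i = n"; cases "j = n") (auto simp: Int_commute)
  moreover have "\<forall>i\<in>insert n J. (\<sigma>(n := B)) i \<in> g i"
    using \<sigma> B(1) assms(4) by auto
  ultimately have "consistent_on (insert n J) (\<sigma>(n := B))"
    unfolding consistent_on_def by blast
  then show ?thesis ..
qed

lemma consistent_on_extend:
  assumes "consistent_on I \<tau>" "I \<subseteq> {..<k}"
  shows "n \<le> k \<Longrightarrow> \<exists>\<sigma>. consistent_on (I \<union> {..<n}) \<sigma> \<and> (\<forall>i\<in>I. \<sigma> i = \<tau> i)"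
proof (induction n)
  case 0
  show ?case
    by (rule exI[of _ \<tau>]) (use assms(1) in simp)
next
  case (Suc n)
  let ?J = "I \<union> {..<n}"
  obtain \<sigma> where \<sigma>: "consistent_on ?J \<sigma>" "\<forall>i\<in>I. \<sigma> i = \<tau> i"
    using Suc.IH[OF Suc_leD[OF Suc.prems]] by blast
  have n: "n < k" and J: "I \<union> {..<Suc n} = insert n ?J" and Jk: "?J \<subseteq> {..<k}"
    using Suc.prems assms(2) by auto
  show ?case
  proof (cases "n \<in> ?J")
    case True
    show ?thesis
      unfolding J insert_absorb[OF True] by (rule exI[of _ \<sigma>]) (use \<sigma> in blast)
  next
    case False
    then obtain B where B: "consistent_on (insert n ?J) (\<sigma>(n := B))"
      using consistent_on_insert[OF \<sigma>(1) Jk n] by blast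
    have "\<forall>i\<in>I. (\<sigma>(n := B)) i = \<tau> i"
      using \<sigma>(2) False by auto
    with B show ?thesis
      unfolding J by blast
  qed
qed

lemma consistent_orientation_extend:
  assumes "I \<subseteq> {..<k}" "consistent_on I \<tau>"
  obtains \<sigma> where "\<sigma> \<in> consistent_orientations k" "\<forall>i\<in>I. \<sigma> i = \<tau> i"
proof -
  have "I \<union> {..<k} = {..<k}"
    using assms(1) by blast
  then obtain \<sigma> where \<sigma>: "consistent_on {..<k} \<sigma>" "\<forall>i\<in>I. \<sigma> i = \<tau> i"
    using consistent_on_extend[OF assms(2,1) order_refl] by auto
  have "(\<lambda>i. if i < k then \<sigma> i else {}) \<in> consistent_orientations k"
    using \<sigma>(1) unfolding consistent_orientations_def consistent_on_def by simp
  moreover have "\<forall>i\<in>I. (if i < k then \<sigma> i else {}) = \<tau> i"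
    using \<sigma>(2) assms(1) by auto
  ultimately show ?thesis
    by (rule that)
qed

lemma maximal_side_nested_or_disjoint:
  assumes "D \<subseteq> E" "E - D \<noteq> {}" "i0 < k" "A0 \<in> g i0" "A0 \<subseteq> D"
    and "\<forall>i<k. \<forall>B\<in>g i. B \<subseteq> D \<longrightarrow> A0 \<subseteq> B \<longrightarrow> A0 = B"
    and "i < k" "A \<in> g i" "A \<subseteq> D"
  shows "A \<subseteq> A0 \<or> A \<inter> A0 = {}"
proof -
  have "A \<union> A0 \<noteq> E"
    using assms(1,2,5,9) by blast
  then consider "A \<subseteq> A0" | "A0 \<subseteq> A" | "A \<inter> A0 = {}"
    using compatible_sides_cases[OF compat[OF assms(7,3)] cut[OF assms(7)] cut[OF assms(3)] assms(8,4)]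
    by blast
  then show ?thesis
    by cases (use assms(6-9) in auto)
qed

text \<open>Otherwise the cut \<open>g i\<close> would separate sides of \<open>g j\<close> and \<open>g l\<close>, so every cut crossing these
  two would cross it.\<close>
lemma Gamma_adjacent_disjoint_side_unique:
  assumes "Gamma_adjacent X \<Gamma> (g j) (g l)" "g i \<in> \<Gamma>" "g i \<noteq> g j" "g i \<noteq> g l"
    and "i < k" "j < k" "l < k"
    and "A \<in> g i" "B \<in> g j" "A \<inter> B = {}" "A' \<in> g i" "C \<in> g l" "A' \<inter> C = {}"
  shows "A' = A"
proof (rule ccontr)
  assume "A' \<noteq> A"
  then have "A' = E - A"
    using is_cut_sideD(1)[OF cut[OF assms(5)] assms(8)] assms(11) by auto
  then have "B \<subseteq> A'"
    using assms(10) is_cut_sideD(2)[OF cut[OF assms(6)] assms(9)] by blast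
  show False
    using Gamma_adjacent_not_separated[OF assms(1-4) cut[OF assms(5)] cut[OF assms(7)] assms(9,11,12)
        \<open>B \<subseteq> A'\<close> assms(13)] .
qed

lemma adj_triangle_disjoint_sides:
  assumes "i < k" "j < k" "l < k" "adj_triangle X (g i) (g j) (g l)"
  obtains A B C where "A \<in> g i" "B \<in> g j" "C \<in> g l" "A \<inter> B = {}" "A \<inter> C = {}" "B \<inter> C = {}"
proof -
  let ?\<Gamma> = "{g i, g j, g l}"
  have dist: "g i \<noteq> g j" "g i \<noteq> g l" "g j \<noteq> g l"
    and adj: "Gamma_adjacent X ?\<Gamma> (g i) (g j)" "Gamma_adjacent X ?\<Gamma> (g i) (g l)"
      "Gamma_adjacent X ?\<Gamma> (g j) (g l)"
    using assms(4) unfolding adj_triangle_def by auto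
  have mem: "g i \<in> ?\<Gamma>" "g j \<in> ?\<Gamma>" "g l \<in> ?\<Gamma>"
    by simp_all
  obtain A B where AB: "A \<in> g i" "B \<in> g j" "A \<inter> B = {}" "B \<inter> A = {}"
    using compatible_disjoint_sides[OF compat[OF assms(1,2)]] by blast
  obtain A' C where AC: "A' \<in> g i" "C \<in> g l" "A' \<inter> C = {}" "C \<inter> A' = {}"
    using compatible_disjoint_sides[OF compat[OF assms(1,3)]] by blast
  obtain B' C' where BC: "B' \<in> g j" "C' \<in> g l" "B' \<inter> C' = {}" "C' \<inter> B' = {}"
    using compatible_disjoint_sides[OF compat[OF assms(2,3)]] by blast
  have "A' = A"
    by (rule Gamma_adjacent_disjoint_side_unique[OF adj(3) mem(1) dist(1,2) assms(1-3) AB(1-3) AC(1-3)])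
  moreover have "B' = B"
    by (rule Gamma_adjacent_disjoint_side_unique[OF adj(2) mem(2) dist(1)[symmetric] dist(3)
          assms(2,1,3) AB(2,1,4) BC(1-3)])
  moreover have "C' = C"
    by (rule Gamma_adjacent_disjoint_side_unique[OF adj(1) mem(3) dist(2)[symmetric] dist(3)[symmetric]
          assms(3,1,2) AC(2,1,4) BC(2,1,4)])
  ultimately show ?thesis
    using that AB AC BC by blast
qed

end

locale cut_link = compatible_cuts +
  assumes stone: "stone_space X"
    and non_peripheral: "\<And>i. i < k \<Longrightarrow> non_peripheral X (g i)"
begin

abbreviation L where "L \<equiv> link_inter X g k"

lemma link_interD:
  assumes "d \<in> L"
  shows "non_peripheral X d" "is_cut X d" "i < k \<Longrightarrow> g i \<noteq> d" "i < k \<Longrightarrow> compatible (g i) d"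
  using assms unfolding link_inter_def cc_adj_def non_peripheral_def by auto

lemma link_side_neq_side:
  assumes "d \<in> L" "i < k" "D \<in> d" "A \<in> g i"
  shows "D \<noteq> A"
  using link_interD(3)[OF assms(1,2)] is_cut_sideD(1)[OF link_interD(2)[OF assms(1)] assms(3)]
    is_cut_sideD(1)[OF cut[OF assms(2)] assms(4)] by auto

lemma side_towards_link_unique:
  assumes "d \<in> L" "i < k" "S1 \<in> g i" "S2 \<in> g i" "D1 \<in> d" "D2 \<in> d" "D1 \<subseteq> S1" "D2 \<subseteq> S2"
  shows "S1 = S2"
proof (rule ccontr)
  assume "S1 \<noteq> S2"
  then have S2: "S2 = E - S1" and "S1 \<subseteq> E"
    using is_cut_sideD(1,2)[OF cut[OF assms(2)] assms(3)] assms(4) by auto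
  have "D2 = D1 \<or> D2 = E - D1" "D1 \<noteq> {}"
    using is_cut_sideD(1,3)[OF link_interD(2)[OF assms(1)] assms(5)] assms(6) by auto
  then have "S1 \<subseteq> D1"
    using assms(7,8) S2 \<open>S1 \<subseteq> E\<close> by blast
  then show False
    using link_side_neq_side[OF assms(1,2,5,3)] assms(7) by blast
qed

lemma side_towards_link_exists:
  assumes "d \<in> L" "i < k"
  shows "\<exists>S\<in>g i. \<exists>D\<in>d. D \<subseteq> S"
proof -
  obtain A B where AB: "A \<in> g i" "B \<in> d" "A \<inter> B = {}"
    using compatible_disjoint_sides[OF link_interD(4)[OF assms]] by blast
  moreover have "E - A \<in> g i"
    using is_cut_sideD(1)[OF cut[OF assms(2)] AB(1)] by auto
  moreover have "B \<subseteq> E - A"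
    using is_cut_sideD(2)[OF link_interD(2)[OF assms(1)] AB(2)] AB(3) by blast
  ultimately show ?thesis
    by blast
qed

definition orientation :: "'a set set \<Rightarrow> nat \<Rightarrow> 'a set" where
  "orientation d i = (if i < k then THE S. S \<in> g i \<and> (\<exists>D\<in>d. D \<subseteq> S) else {})"

lemma orientation_eq:
  assumes "d \<in> L" "i < k" "S \<in> g i" "D \<in> d" "D \<subseteq> S"
  shows "orientation d i = S"
proof -
  have "(THE S. S \<in> g i \<and> (\<exists>D\<in>d. D \<subseteq> S)) = S"
  proof (rule the_equality)
    show "S \<in> g i \<and> (\<exists>D\<in>d. D \<subseteq> S)"
      using assms(3-5) by blast
    show "S' = S" if "S' \<in> g i \<and> (\<exists>D\<in>d. D \<subseteq> S')" for S'
      using that side_towards_link_unique[OF assms(1,2) _ assms(3) _ assms(4) _ assms(5)] by blast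
  qed
  then show ?thesis
    unfolding orientation_def using assms(2) by simp
qed

lemma orientation_side:
  assumes "d \<in> L" "i < k"
  shows "orientation d i \<in> g i" "\<exists>D\<in>d. D \<subseteq> orientation d i"
  using side_towards_link_exists[OF assms] orientation_eq[OF assms] by metis+

lemma orientation_consistent:
  assumes "d \<in> L"
  shows "orientation d \<in> consistent_orientations k"
proof -
  have "orientation d i \<inter> orientation d j \<noteq> {}" if ij: "i < k" "j < k" for i j
  proof
    assume disj: "orientation d i \<inter> orientation d j = {}"
    obtain D1 D2 where D: "D1 \<in> d" "D1 \<subseteq> orientation d i" "D2 \<in> d" "D2 \<subseteq> orientation d j"
      using orientation_side(2)[OF assms ij(1)] orientation_side(2)[OF assms ij(2)] by blast
    have "D2 = D1 \<or> D2 = E - D1" "D1 \<noteq> {}"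
      using is_cut_sideD(1,3)[OF link_interD(2)[OF assms] D(1)] D(3) by auto
    moreover have "orientation d i \<subseteq> E"
      using is_cut_sideD(2)[OF cut[OF ij(1)] orientation_side(1)[OF assms ij(1)]] .
    ultimately have "orientation d i \<subseteq> D1"
      using D(2,4) disj by blast
    then show False
      using link_side_neq_side[OF assms ij(1) D(1) orientation_side(1)[OF assms ij(1)]] D(2) by blast
  qed
  then show ?thesis
    unfolding consistent_orientations_def using orientation_side(1)[OF assms]
    by (auto simp: orientation_def)
qed

lemma orientations_of_link: "orientation ` L \<subseteq> consistent_orientations k"
  using orientation_consistent by blast

lemma side_within_or_towards_orientation:
  assumes "d \<in> L" "i < k" "D \<in> d"
  shows "(\<exists>A\<in>g i. A \<subseteq> D) \<or> D \<subseteq> orientation d i"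
proof -
  obtain D' where D': "D' \<in> d" "D' \<subseteq> orientation d i"
    using orientation_side(2)[OF assms(1,2)] by blast
  have "D' = D \<or> D' = E - D"
    using is_cut_sideD(1)[OF link_interD(2)[OF assms(1)] assms(3)] D'(1) by auto
  then show ?thesis
  proof
    assume "D' = D"
    then show ?thesis
      using D'(2) by simp
  next
    assume "D' = E - D"
    then have "E - orientation d i \<subseteq> D"
      using D'(2) by blast
    moreover have "E - orientation d i \<in> g i"
      using is_cut_sideD(1)[OF cut[OF assms(2)] orientation_side(1)[OF assms(1,2)]] by auto
    ultimately show ?thesis
      by blast
  qed
qed

lemma crosses_orientation_eq:
  assumes "d \<in> L" "d' \<in> L" "crosses d d'"
  shows "orientation d = orientation d'"
proof
  fix i
  show "orientation d i = orientation d' i"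
  proof (cases "i < k")
    case True
    obtain D D' where D: "D \<in> d" "D \<subseteq> orientation d i" "D' \<in> d'" "D' \<subseteq> orientation d' i"
      using orientation_side(2)[OF assms(1) True] orientation_side(2)[OF assms(2) True] by blast
    show ?thesis
    proof (rule ccontr)
      assume "orientation d i \<noteq> orientation d' i"
      then have "orientation d' i = E - orientation d i"
        using is_cut_sideD(1)[OF cut[OF True] orientation_side(1)[OF assms(1) True]]
          orientation_side(1)[OF assms(2) True] by auto
      then have "D \<inter> D' = {}"
        using D(2,4) by blast
      then show False
        using assms(3) D(1,3) unfolding crosses_def by blast
    qed
  qed (simp add: orientation_def)
qed

text \<open>If some side of a \<open>g i\<close> lies in \<open>D\<close>, a maximal one does; otherwise split two points of \<open>D\<close>.\<close>
lemma clopen_piece_respecting_cuts: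
  assumes "d \<in> L" "D \<in> d"
  shows "\<exists>D1. openin X D1 \<and> closedin X D1 \<and> D1 \<subseteq> D \<and> D1 \<noteq> {} \<and> D - D1 \<noteq> {}
    \<and> (\<forall>i<k. \<forall>A\<in>g i. A \<subseteq> D \<longrightarrow> A \<subseteq> D1 \<or> A \<inter> D1 = {})"
proof -
  note D = is_cut_sideD[OF link_interD(2)[OF assms(1)] assms(2)]
  define \<A> where "\<A> = {A. \<exists>i<k. A \<in> g i \<and> A \<subseteq> D}"
  have "finite \<A>"
  proof (rule finite_subset)
    show "\<A> \<subseteq> \<Union> (g ` {..<k})"
      unfolding \<A>_def by blast
    show "finite (\<Union> (g ` {..<k}))"
      using cut is_cut_finite by blast
  qed
  show ?thesis
  proof (cases "\<A> = {}")
    case True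
    then have no_side: "\<forall>i<k. \<forall>A\<in>g i. \<not> A \<subseteq> D"
      unfolding \<A>_def by blast
    obtain x y where xy: "x \<in> D" "y \<in> D" "x \<noteq> y"
      using link_interD(1)[OF assms(1)] assms(2) unfolding non_peripheral_def by blast
    obtain T where T: "openin X T" "closedin X T" "x \<in> T" "y \<notin> T"
      using stone_space_separating_clopen[OF stone _ _ xy(3)] xy(1,2) D(2) by blast
    have "openin X (D \<inter> T)" "closedin X (D \<inter> T)"
      using D(5,6) T(1,2) by (auto intro: openin_Int closedin_Int)
    moreover have "D \<inter> T \<subseteq> D" "D \<inter> T \<noteq> {}" "D - D \<inter> T \<noteq> {}"
      using xy T(3,4) by blast+
    ultimately show ?thesis
      using no_side by (intro exI[of _ "D \<inter> T"]) simp
  next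
    case False
    obtain A0 where A0: "A0 \<in> \<A>" "\<forall>B\<in>\<A>. A0 \<subseteq> B \<longrightarrow> A0 = B"
      using finite_has_maximal[OF \<open>finite \<A>\<close> False] by blast
    obtain i0 where i0: "i0 < k" "A0 \<in> g i0" "A0 \<subseteq> D"
      using A0(1) unfolding \<A>_def by blast
    have "\<forall>i<k. \<forall>B\<in>g i. B \<subseteq> D \<longrightarrow> A0 \<subseteq> B \<longrightarrow> A0 = B"
      using A0(2) unfolding \<A>_def by blast
    then have "\<forall>i<k. \<forall>A\<in>g i. A \<subseteq> D \<longrightarrow> A \<subseteq> A0 \<or> A \<inter> A0 = {}"
      using maximal_side_nested_or_disjoint[OF D(2,4) i0] by blast
    moreover have "D - A0 \<noteq> {}"
      using i0(3) link_side_neq_side[OF assms(1) i0(1) assms(2) i0(2)] by blast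
    ultimately show ?thesis
      using is_cut_sideD(3,5,6)[OF cut[OF i0(1)] i0(2)] i0(3) by (intro exI[of _ A0]) blast
  qed
qed

text \<open>A side of \<open>g i\<close> inside \<open>D\<close> or \<open>F\<close> is nested in or disjoint from the piece carved out of it;
  otherwise \<open>D\<close> and \<open>F\<close> both lie in the common side \<open>orientation d i = orientation d' i\<close>.\<close>
lemma side_avoiding_pieces:
  assumes "d \<in> L" "d' \<in> L" "orientation d = orientation d'" "i < k"
    and "D \<in> d" "F \<in> d'" "D \<inter> F = {}" "D1 \<subseteq> D" "F1 \<subseteq> F"
    and "\<forall>i<k. \<forall>A\<in>g i. A \<subseteq> D \<longrightarrow> A \<subseteq> D1 \<or> A \<inter> D1 = {}"
    and "\<forall>i<k. \<forall>A\<in>g i. A \<subseteq> F \<longrightarrow> A \<subseteq> F1 \<or> A \<inter> F1 = {}"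
  shows "\<exists>A\<in>g i. A \<inter> (D1 \<union> F1) = {} \<or> A \<inter> (E - (D1 \<union> F1)) = {}"
proof -
  have "(\<exists>A\<in>g i. A \<subseteq> D) \<or> D \<subseteq> orientation d i" "(\<exists>A\<in>g i. A \<subseteq> F) \<or> F \<subseteq> orientation d i"
    using side_within_or_towards_orientation[OF assms(1,4,5)]
      side_within_or_towards_orientation[OF assms(2,4,6)] assms(3) by simp_all
  then consider A where "A \<in> g i" "A \<subseteq> D" | A where "A \<in> g i" "A \<subseteq> F"
    | "D \<subseteq> orientation d i" "F \<subseteq> orientation d i"
    by blast
  then show ?thesis
  proof cases
    case (1 A)
    have "A \<inter> (D1 \<union> F1) = {} \<or> A \<inter> (E - (D1 \<union> F1)) = {}"
      by (rule piece_nested_or_disjoint[OF 1(2) assms(7,9) assms(10)[rule_format, OF assms(4) 1]])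
    then show ?thesis
      by (rule bexI[OF _ 1(1)])
  next
    case (2 A)
    have "F \<inter> D = {}"
      using assms(7) by blast
    from piece_nested_or_disjoint[OF 2(2) this assms(8) assms(11)[rule_format, OF assms(4) 2]]
    have "A \<inter> (D1 \<union> F1) = {} \<or> A \<inter> (E - (D1 \<union> F1)) = {}"
      by (simp only: Un_commute)
    then show ?thesis
      by (rule bexI[OF _ 2(1)])
  next
    case 3
    then have "(E - orientation d i) \<inter> (D1 \<union> F1) = {}"
      using assms(8,9) by blast
    moreover have "E - orientation d i \<in> g i"
      using is_cut_sideD(1)[OF cut[OF assms(4)] orientation_side(1)[OF assms(1,4)]] by auto
    ultimately show ?thesis
      by (intro bexI[of _ "E - orientation d i"]) simp_all
  qed
qed

text \<open>The bridge carves clopen pieces out of disjoint sides \<open>D\<close> of \<open>d\<close> and \<open>F\<close> of \<open>d'\<close>.\<close>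
lemma link_bridge:
  assumes "d \<in> L" "d' \<in> L" "orientation d = orientation d'" "\<not> crosses d d'"
  obtains e where "e \<in> L" "crosses d e" "crosses e d'"
proof -
  obtain D F where DF: "D \<in> d" "F \<in> d'" "D \<inter> F = {}"
    using assms(4) unfolding crosses_def by blast
  obtain D1 where D1: "openin X D1" "closedin X D1" "D1 \<subseteq> D" "D1 \<noteq> {}" "D - D1 \<noteq> {}"
      "\<forall>i<k. \<forall>A\<in>g i. A \<subseteq> D \<longrightarrow> A \<subseteq> D1 \<or> A \<inter> D1 = {}"
    using clopen_piece_respecting_cuts[OF assms(1) DF(1)] by blast
  obtain F1 where F1: "openin X F1" "closedin X F1" "F1 \<subseteq> F" "F1 \<noteq> {}" "F - F1 \<noteq> {}"
      "\<forall>i<k. \<forall>A\<in>g i. A \<subseteq> F \<longrightarrow> A \<subseteq> F1 \<or> A \<inter> F1 = {}"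
    using clopen_piece_respecting_cuts[OF assms(2) DF(2)] by blast
  define e where "e = {D1 \<union> F1, E - (D1 \<union> F1)}"
  note e = crossing_cut_from_pieces[OF link_interD(2)[OF assms(1)] link_interD(2)[OF assms(2)]
      DF D1(1-5) F1(1-5), folded e_def]
  have "cc_adj X (g i) e" if i: "i < k" for i
  proof -
    obtain A where "A \<in> g i" "A \<inter> (D1 \<union> F1) = {} \<or> A \<inter> (E - (D1 \<union> F1)) = {}"
      using side_avoiding_pieces[OF assms(1-3) i DF D1(3) F1(3) D1(6) F1(6)] by blast
    then have "\<not> crosses (g i) e"
      unfolding crosses_def e_def by blast
    moreover have "g i \<noteq> e"
    proof
      assume "g i = e"
      then show False
        using e(2) link_interD(4)[OF assms(1) i] crosses_commute unfolding compatible_def by simp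
    qed
    ultimately show ?thesis
      unfolding cc_adj_def compatible_def using non_peripheral[OF i] e(1) by simp
  qed
  then have "e \<in> L"
    unfolding link_inter_def using e(1) by simp
  moreover have "crosses d e"
    using e(2) crosses_commute by blast
  ultimately show ?thesis
    using e(3) by (rule that)
qed

lemma opp_adj_link_iff: "opp_adj X L c d \<longleftrightarrow> c \<in> L \<and> d \<in> L \<and> crosses c d"
proof
  assume "opp_adj X L c d"
  then show "c \<in> L \<and> d \<in> L \<and> crosses c d"
    using link_interD(1) unfolding opp_adj_def cc_adj_def compatible_def by blast
next
  assume cd: "c \<in> L \<and> d \<in> L \<and> crosses c d"
  then have "c \<noteq> d"
    using is_cut_not_crosses_self[OF link_interD(2)] by blast
  then show "opp_adj X L c d"
    using cd unfolding opp_adj_def cc_adj_def compatible_def by blast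
qed

lemma opp_component_eq_orientation_fibre:
  assumes "c \<in> L"
  shows "{d \<in> L. (opp_adj X L)\<^sup>*\<^sup>* c d} = {d \<in> L. orientation d = orientation c}"
proof (intro set_eqI iffI; clarify)
  fix d
  assume "(opp_adj X L)\<^sup>*\<^sup>* c d"
  then show "orientation d = orientation c"
  proof (induction rule: rtranclp_induct)
    case (step y z)
    then show ?case
      using crosses_orientation_eq unfolding opp_adj_link_iff by metis
  qed simp
next
  fix d
  assume d: "d \<in> L" "orientation d = orientation c"
  show "(opp_adj X L)\<^sup>*\<^sup>* c d"
  proof (cases "crosses c d")
    case True
    then show ?thesis
      using assms d(1) by (simp add: opp_adj_link_iff r_into_rtranclp)
  next
    case False
    obtain e where "e \<in> L" "crosses c e" "crosses e d"
      by (rule link_bridge[OF assms d(1) d(2)[symmetric] False])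
    then show ?thesis
      using assms d(1) by (meson opp_adj_link_iff converse_rtranclp_into_rtranclp r_into_rtranclp)
  qed
qed

lemma opp_components_link_eq: "opp_components X L = (\<lambda>\<sigma>. {d \<in> L. orientation d = \<sigma>}) ` orientation ` L"
proof -
  have "opp_components X L = (\<lambda>c. {d \<in> L. (opp_adj X L)\<^sup>*\<^sup>* c d}) ` L"
    unfolding opp_components_def by blast
  also have "\<dots> = (\<lambda>c. {d \<in> L. orientation d = orientation c}) ` L"
    by (rule image_cong) (simp_all add: opp_component_eq_orientation_fibre)
  finally show ?thesis
    by (simp add: image_image)
qed

lemma card_opp_components:
  "finite (opp_components X L)" "card (opp_components X L) = card (orientation ` L)"
proof -
  have "inj_on (\<lambda>\<sigma>. {d \<in> L. orientation d = \<sigma>}) (orientation ` L)"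
  proof (rule inj_onI)
    fix \<sigma> \<sigma>'
    assume "\<sigma> \<in> orientation ` L" and eq: "{d \<in> L. orientation d = \<sigma>} = {d \<in> L. orientation d = \<sigma>'}"
    then obtain d where d: "d \<in> L" "orientation d = \<sigma>"
      by blast
    then have "d \<in> {d \<in> L. orientation d = \<sigma>}"
      by simp
    then have "d \<in> {d \<in> L. orientation d = \<sigma>'}"
      unfolding eq .
    then show "\<sigma> = \<sigma>'"
      using d(2) by simp
  qed
  moreover have "finite (orientation ` L)"
    by (rule finite_subset[OF orientations_of_link finite_consistent_orientations])
  ultimately show "finite (opp_components X L)" "card (opp_components X L) = card (orientation ` L)"
    unfolding opp_components_link_eq by (simp_all add: card_image)
qed

lemma card_opp_components_le: "card (opp_components X L) \<le> k + 1"
  using card_mono[OF finite_consistent_orientations orientations_of_link]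
    card_consistent_orientations_le card_opp_components(2) by simp

lemma link_cut_within_sides:
  assumes "card (opp_components X L) = k + 1" "I \<subseteq> {..<k}" "consistent_on I \<tau>"
  shows "\<exists>d\<in>L. \<forall>i\<in>I. \<exists>D\<in>d. D \<subseteq> \<tau> i"
proof -
  have "card (consistent_orientations k) \<le> card (orientation ` L)"
    using card_consistent_orientations_le assms(1) card_opp_components(2) by simp
  then have "orientation ` L = consistent_orientations k"
    by (rule card_seteq[OF finite_consistent_orientations orientations_of_link])
  moreover obtain \<sigma> where \<sigma>: "\<sigma> \<in> consistent_orientations k" "\<forall>i\<in>I. \<sigma> i = \<tau> i"
    using consistent_orientation_extend[OF assms(2,3)] by blast
  ultimately obtain d where d: "d \<in> L" "orientation d = \<sigma>"
    by (metis imageE)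
  have "\<exists>D\<in>d. D \<subseteq> \<tau> i" if "i \<in> I" for i
  proof -
    have "orientation d i = \<tau> i" and i: "i < k"
      using d(2) \<sigma>(2) that assms(2) by auto
    then show ?thesis
      using orientation_side(2)[OF d(1) i] by simp
  qed
  then show ?thesis
    by (intro bexI[OF _ d(1)] ballI)
qed

lemma not_outermost:
  assumes "card (opp_components X L) = k + 1" "i < k"
  shows "\<not> outermost X (g i)"
proof
  assume "outermost X (g i)"
  then obtain A where A: "A \<in> g i" "finite A" "card A = 2"
    unfolding outermost_def by blast
  have "\<exists>d\<in>L. \<forall>t\<in>{i}. \<exists>D\<in>d. D \<subseteq> A"
    using link_cut_within_sides[OF assms(1), of "{i}" "\<lambda>_. A"] assms(2) A(1)
      is_cut_sideD(3)[OF cut[OF assms(2)] A(1)] by (simp add: consistent_on_def)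
  then obtain d D where d: "d \<in> L" "D \<in> d" "D \<subseteq> A"
    by blast
  then obtain x y where "x \<in> D" "y \<in> D" "x \<noteq> y"
    using link_interD(1) unfolding non_peripheral_def by blast
  then have "D = A"
    by (rule card_two_subset_eq[OF _ _ _ d(3) A(2,3)])
  then show False
    using link_side_neq_side[OF d(1) assms(2) d(2) A(1)] by blast
qed

lemma not_peripheral_pair:
  assumes "card (opp_components X L) = k + 1" "i < k" "j < k" "i \<noteq> j"
  shows "\<not> peripheral_pair X (g i) (g j)"
proof
  assume "peripheral_pair X (g i) (g j)"
  then obtain A B x where AB: "A \<in> g i" "B \<in> g j" "A \<inter> B = {x}"
    unfolding peripheral_pair_def by blast
  note A = is_cut_sideD[OF cut[OF assms(2)] AB(1)] and B = is_cut_sideD[OF cut[OF assms(3)] AB(2)]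
  let ?\<tau> = "\<lambda>t. if t = i then A else B"
  have "consistent_on {i, j} ?\<tau>"
    unfolding consistent_on_def using assms(4) AB A(3) B(3) by (auto simp: Int_commute)
  moreover have "{i, j} \<subseteq> {..<k}"
    using assms(2,3) by simp
  ultimately have "\<exists>d\<in>L. \<forall>t\<in>{i, j}. \<exists>D\<in>d. D \<subseteq> ?\<tau> t"
    using link_cut_within_sides[OF assms(1)] by blast
  then obtain d where d: "d \<in> L" "\<exists>D\<in>d. D \<subseteq> ?\<tau> i" "\<exists>D\<in>d. D \<subseteq> ?\<tau> j"
    by blast
  then obtain D1 D2 where D: "d \<in> L" "D1 \<in> d" "D1 \<subseteq> A" "D2 \<in> d" "D2 \<subseteq> B"
    using assms(4) by auto
  note D1 = is_cut_sideD[OF link_interD(2)[OF D(1)] D(2)]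
  have "D1 \<noteq> A" "D2 \<noteq> B"
    using link_side_neq_side[OF D(1) assms(2) D(2) AB(1)] link_side_neq_side[OF D(1) assms(3) D(4) AB(2)] .
  obtain y z where "y \<in> D1" "z \<in> D1" "y \<noteq> z"
    using link_interD(1)[OF D(1)] D(2) unfolding non_peripheral_def by blast
  moreover have only_x: "a = x" if "a \<in> A" "a \<in> B" for a
    using that AB(3) by (metis IntI singletonD)
  ultimately have "D2 \<noteq> D1"
    using D(3,5) by blast
  then have D2: "D2 = E - D1"
    using D1(1) D(4) by auto
  \<comment> \<open>The sides of \<open>d\<close> in \<open>A\<close> and \<open>B\<close> cover \<open>E\<close>, so one of them misses only the common point.\<close>
  have "A \<subseteq> D1 \<or> B \<subseteq> D2"
  proof (cases "x \<in> D1")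
    case True
    then show ?thesis
      using D(5) D2 only_x A(2) by (intro disjI1) blast
  next
    case False
    then show ?thesis
      using D(3) D2 only_x B(2) by (intro disjI2) blast
  qed
  then show False
    using \<open>D1 \<noteq> A\<close> \<open>D2 \<noteq> B\<close> D(3,5) subset_antisym by blast
qed

text \<open>Two of the three outer sides contain the same side of \<open>d\<close>, which is then pinched onto the third
  inner side.\<close>
lemma link_cut_not_within_outer_sides:
  assumes "d \<in> L" "i < k" "j < k" "l < k" "A \<in> g i" "B \<in> g j" "C \<in> g l" "E \<subseteq> A \<union> B \<union> C"
    and "\<exists>D\<in>d. D \<subseteq> E - A" "\<exists>D\<in>d. D \<subseteq> E - B" "\<exists>D\<in>d. D \<subseteq> E - C"
  shows False
proof -
  obtain D Y Z where DYZ: "D \<in> d" "D \<subseteq> E - A" "Y \<in> d" "Y \<subseteq> E - B" "Z \<in> d" "Z \<subseteq> E - C"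
    using assms(9-11) by blast
  note D = is_cut_sideD[OF link_interD(2)[OF assms(1)] DYZ(1)]
  have YZ: "Y = D \<or> Y = E - D" "Z = D \<or> Z = E - D" and "E - D \<in> d"
    using D(1) DYZ(3,5) by auto
  have neq: "D \<noteq> B" "D \<noteq> C" "E - D \<noteq> A"
    using link_side_neq_side[OF assms(1,3) DYZ(1) assms(6)] link_side_neq_side[OF assms(1,4) DYZ(1) assms(7)]
      link_side_neq_side[OF assms(1,2) \<open>E - D \<in> d\<close> assms(5)] .
  have pinch: "S = R" if "S \<subseteq> E" "S \<union> S' = E" "S \<subseteq> E - P" "S \<subseteq> E - Q" "S' \<subseteq> E - R"
    "E \<subseteq> P \<union> Q \<union> R" "R \<subseteq> E" for S S' P Q R
    using that by (intro subset_antisym) blast+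
  consider "D \<subseteq> E - B" "D \<subseteq> E - C" | "D \<subseteq> E - B" "E - D \<subseteq> E - C"
    | "E - D \<subseteq> E - B" "D \<subseteq> E - C" | "E - D \<subseteq> E - B" "E - D \<subseteq> E - C"
    using YZ DYZ(4,6) by blast
  then show False
  proof cases
    case 1
    then show ?thesis
      using D(3) DYZ(2) assms(8) by blast
  next
    case 2
    then show ?thesis
      using pinch[of D "E - D" A B C] D(2) DYZ(2) assms(8) is_cut_sideD(2)[OF cut assms(7)] assms(4) neq(2)
      by blast
  next
    case 3
    then show ?thesis
      using pinch[of D "E - D" A C B] D(2) DYZ(2) assms(8) is_cut_sideD(2)[OF cut assms(6)] assms(3) neq(1)
      by blast
  next
    case 4
    then show ?thesis
      using pinch[of "E - D" D B C A] D(2) DYZ(2) assms(8) is_cut_sideD(2)[OF cut assms(5)] assms(2) neq(3)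
      by blast
  qed
qed

lemma adj_triangle_outer_sides_meet:
  assumes "card (opp_components X L) = k + 1" "i < k" "j < k" "l < k" "i \<noteq> j" "i \<noteq> l" "j \<noteq> l"
    and "A \<in> g i" "B \<in> g j" "C \<in> g l" "A \<inter> B = {}" "A \<inter> C = {}" "B \<inter> C = {}"
  shows "(E - A) \<inter> (E - B) \<inter> (E - C) \<noteq> {}"
proof
  assume empty: "(E - A) \<inter> (E - B) \<inter> (E - C) = {}"
  note A = is_cut_sideD[OF cut[OF assms(2)] assms(8)] and B = is_cut_sideD[OF cut[OF assms(3)] assms(9)]
    and C = is_cut_sideD[OF cut[OF assms(4)] assms(10)]
  let ?\<tau> = "\<lambda>t. if t = i then E - A else if t = j then E - B else E - C"
  have "C \<subseteq> (E - A) \<inter> (E - B)" "B \<subseteq> (E - A) \<inter> (E - C)" "A \<subseteq> (E - B) \<inter> (E - C)"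
    using assms(11-13) A(2) B(2) C(2) by blast+
  then have "(E - A) \<inter> (E - B) \<noteq> {}" "(E - A) \<inter> (E - C) \<noteq> {}" "(E - B) \<inter> (E - C) \<noteq> {}"
    using A(3) B(3) C(3) by auto
  then have "consistent_on {i, j, l} ?\<tau>"
    unfolding consistent_on_def using assms(5-7) A(1,4) B(1,4) C(1,4) by (auto simp: Int_commute)
  moreover have "{i, j, l} \<subseteq> {..<k}"
    using assms(2-4) by simp
  ultimately obtain d where d: "d \<in> L" "\<forall>t\<in>{i, j, l}. \<exists>D\<in>d. D \<subseteq> ?\<tau> t"
    using link_cut_within_sides[OF assms(1)] by blast
  have within: "\<exists>D\<in>d. D \<subseteq> ?\<tau> t" if "t \<in> {i, j, l}" for t
    using d(2) that by blast
  have "\<exists>D\<in>d. D \<subseteq> E - A" "\<exists>D\<in>d. D \<subseteq> E - B" "\<exists>D\<in>d. D \<subseteq> E - C"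
    using within[of i] within[of j] within[of l] assms(5-7) assms(5-7)[symmetric] by simp_all
  moreover have "E \<subseteq> A \<union> B \<union> C"
    using empty by blast
  ultimately show False
    using link_cut_not_within_outer_sides[OF d(1) assms(2-4,8-10)] by blast
qed

lemma adj_triangle_sides:
  assumes "card (opp_components X L) = k + 1" "i < k" "j < k" "l < k"
    and "i \<noteq> j \<and> i \<noteq> l \<and> j \<noteq> l \<and> adj_triangle X (g i) (g j) (g l)"
  shows "\<exists>Ui Vi Uj Vj Ul Vl. g i = {Ui, Vi} \<and> g j = {Uj, Vj} \<and> g l = {Ul, Vl}
    \<and> Ui \<inter> Uj = {} \<and> Ui \<inter> Ul = {} \<and> Uj \<inter> Ul = {} \<and> Vi \<inter> Vj \<inter> Vl \<noteq> {}"
proof -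
  have dist: "i \<noteq> j" "i \<noteq> l" "j \<noteq> l" and adj: "adj_triangle X (g i) (g j) (g l)"
    using assms(5) by simp_all
  obtain A B C where ABC: "A \<in> g i" "B \<in> g j" "C \<in> g l" "A \<inter> B = {}" "A \<inter> C = {}" "B \<inter> C = {}"
    by (rule adj_triangle_disjoint_sides[OF assms(2-4) adj])
  have sides: "g i = {A, E - A}" "g j = {B, E - B}" "g l = {C, E - C}"
    using is_cut_sideD(1)[OF cut] ABC(1-3) assms(2-4) by simp_all
  have meet: "(E - A) \<inter> (E - B) \<inter> (E - C) \<noteq> {}"
    by (rule adj_triangle_outer_sides_meet[OF assms(1-4) dist ABC])
  show ?thesis
    by (rule exI[of _ A], rule exI[of _ "E - A"], rule exI[of _ B], rule exI[of _ "E - B"],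
        rule exI[of _ C], rule exI[of _ "E - C"]) (use sides meet ABC(4-6) in simp)
qed

end

theorem mainTheorem11:
  fixes X :: "'a topology" and g :: "nat \<Rightarrow> 'a set set" and k :: nat
  assumes "stone_space X" and "second_countable X"
    and "\<And>i. i < k \<Longrightarrow> non_peripheral X (g i)"
    and "inj_on g {..<k}"
    and "\<And>i j. i < k \<Longrightarrow> j < k \<Longrightarrow> compatible (g i) (g j)"
  shows "finite (opp_components X (link_inter X g k))
      \<and> card (opp_components X (link_inter X g k)) \<le> k + 1
      \<and> (card (opp_components X (link_inter X g k)) = k + 1 \<longrightarrow>
           (\<forall>i<k. \<not> outermost X (g i))
         \<and> (\<forall>i<k. \<forall>j<k. i \<noteq> j \<longrightarrow> \<not> peripheral_pair X (g i) (g j))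
         \<and> (\<forall>i<k. \<forall>j<k. \<forall>l<k. i \<noteq> j \<and> i \<noteq> l \<and> j \<noteq> l \<and> adj_triangle X (g i) (g j) (g l) \<longrightarrow>
              (\<exists>Ui Vi Uj Vj Ul Vl. g i = {Ui, Vi} \<and> g j = {Uj, Vj} \<and> g l = {Ul, Vl}
                 \<and> Ui \<inter> Uj = {} \<and> Ui \<inter> Ul = {} \<and> Uj \<inter> Ul = {} \<and> Vi \<inter> Vj \<inter> Vl \<noteq> {})))"
proof -
  interpret cut_link X g k
    using assms(1,3,5) by unfold_locales (auto simp: non_peripheral_def)
  show ?thesis
    by (intro conjI impI allI; rule card_opp_components(1) card_opp_components_le not_outermost
        not_peripheral_pair adj_triangle_sides; assumption)
qed

end
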